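(* Let $B$ and $Q$ be algebras in the same signature $\tau$, suppose $B$ is abelian and has a Mal'cev term $m$ (a $\tau$-term with $B\models m(x,y,y)=x$ and $m(y,y,x)=x$), fix $0\in B$, and let $x+y:=m^B(x,0,y)$. Let $T_f:Q^{\operatorname{ar}f}\to B$ ($f\in\tau$) be arbitrary maps, and let $q:B\otimes^{T}Q\to Q$ be the projection $(b,x)\mapsto x$. Then $[1,\ker q]=0$ in $B\otimes^{T}Q$.
   Context: All algebras are in the sense of universal algebra. For congruences $\alpha,\beta$ of an algebra, $[\alpha,\beta]$ is the term-condition (TC) commutator; $0$ is the equality relation and $1$ the total relation. An algebra is abelian if $[1,1]=0$. Given algebras $B,Q$ in the same signature $\tau$, a binary operation $+$ on $B$, and maps $T_f:Q^{\operatorname{ar}f}\to B$ ($f\in\tau$), the algebra $B\otimes^{T}Q$ has universe $B\times Q$ and operations $F_f((b_1,q_1),\dots,(b_n,q_n))=\big(f^B(b_1,\dots,b_n)+T_f(q_1,\dots,q_n),\,f^Q(q_1,\dots,q_n)\big)$. *)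

theory Defs
  imports Main
begin

text \<open>A signature is given by a type 'f of operation
symbols together with an arity function ar :: 'f \<Rightarrow> nat. An algebra is a
universe together with an interpretation of every operation symbol (applied to
argument lists; only lists of length ar f from the universe matter).\<close>

record ('a, 'f) alg =
  univ :: "'a set"
  opn  :: "'f \<Rightarrow> 'a list \<Rightarrow> 'a"

definition is_algebra :: "('f \<Rightarrow> nat) \<Rightarrow> ('a, 'f) alg \<Rightarrow> bool" where
  "is_algebra ar A \<longleftrightarrow> univ A \<noteq> {} \<and>
     (\<forall>f xs. xs \<in> lists (univ A) \<and> length xs = ar f \<longrightarrow> opn A f xs \<in> univ A)"

datatype ('f, 'v) trm = Var 'v | Fn 'f "('f, 'v) trm list"

fun wf_trm :: "('f \<Rightarrow> nat) \<Rightarrow> ('f, 'v) trm \<Rightarrow> bool" where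
  "wf_trm ar (Var v) = True"
| "wf_trm ar (Fn f ts) = (length ts = ar f \<and> (\<forall>t \<in> set ts. wf_trm ar t))"

fun vars_trm :: "('f, 'v) trm \<Rightarrow> 'v set" where
  "vars_trm (Var v) = {v}"
| "vars_trm (Fn f ts) = (\<Union>t \<in> set ts. vars_trm t)"

fun eval :: "('a, 'f) alg \<Rightarrow> ('v \<Rightarrow> 'a) \<Rightarrow> ('f, 'v) trm \<Rightarrow> 'a" where
  "eval A \<rho> (Var v) = \<rho> v"
| "eval A \<rho> (Fn f ts) = opn A f (map (eval A \<rho>) ts)"

definition term_op3 :: "('a, 'f) alg \<Rightarrow> ('f, nat) trm \<Rightarrow> 'a \<Rightarrow> 'a \<Rightarrow> 'a \<Rightarrow> 'a" where
  "term_op3 A m x y z = eval A (\<lambda>v. if v = 0 then x else if v = 1 then y else z) m"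

definition is_malcev_term :: "('f \<Rightarrow> nat) \<Rightarrow> ('a, 'f) alg \<Rightarrow> ('f, nat) trm \<Rightarrow> bool" where
  "is_malcev_term ar A m \<longleftrightarrow> wf_trm ar m \<and> vars_trm m \<subseteq> {0, 1, 2} \<and>
     (\<forall>x \<in> univ A. \<forall>y \<in> univ A. term_op3 A m x y y = x \<and> term_op3 A m y y x = x)"

definition congruence :: "('f \<Rightarrow> nat) \<Rightarrow> ('a, 'f) alg \<Rightarrow> ('a \<times> 'a) set \<Rightarrow> bool" where
  "congruence ar A \<theta> \<longleftrightarrow> equiv (univ A) \<theta> \<and>
     (\<forall>f xs ys. length xs = ar f \<and> length ys = ar f \<and> list_all2 (\<lambda>x y. (x, y) \<in> \<theta>) xs ys
        \<longrightarrow> (opn A f xs, opn A f ys) \<in> \<theta>)"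

definition zero_con :: "('a, 'f) alg \<Rightarrow> ('a \<times> 'a) set" where
  "zero_con A = Id_on (univ A)"

definition one_con :: "('a, 'f) alg \<Rightarrow> ('a \<times> 'a) set" where
  "one_con A = univ A \<times> univ A"

text \<open>Term condition: C(\<alpha>,\<beta>;\<delta>) ("\<alpha> centralizes \<beta> modulo \<delta>"): for every term
t(x1..xn, y1..ym) (the x-variables are those in X), all tuples a \<alpha> b and c \<beta> d,
t(a,c) \<delta> t(a,d) implies t(b,c) \<delta> t(b,d).\<close>
definition centralizes :: "('f \<Rightarrow> nat) \<Rightarrow> ('a, 'f) alg \<Rightarrow> ('a \<times> 'a) set \<Rightarrow> ('a \<times> 'a) set
    \<Rightarrow> ('a \<times> 'a) set \<Rightarrow> bool" where
  "centralizes ar A \<alpha> \<beta> \<delta> \<longleftrightarrow>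
     (\<forall>(t :: ('f, nat) trm) (X :: nat set) a b c d.
        wf_trm ar t \<longrightarrow>
        (\<forall>v. (a v, b v) \<in> \<alpha>) \<longrightarrow> (\<forall>v. (c v, d v) \<in> \<beta>) \<longrightarrow>
        (eval A (\<lambda>v. if v \<in> X then a v else c v) t,
         eval A (\<lambda>v. if v \<in> X then a v else d v) t) \<in> \<delta> \<longrightarrow>
        (eval A (\<lambda>v. if v \<in> X then b v else c v) t,
         eval A (\<lambda>v. if v \<in> X then b v else d v) t) \<in> \<delta>)"

definition tc_comm :: "('f \<Rightarrow> nat) \<Rightarrow> ('a, 'f) alg \<Rightarrow> ('a \<times> 'a) set \<Rightarrow> ('a \<times> 'a) set
    \<Rightarrow> ('a \<times> 'a) set" where
  "tc_comm ar A \<alpha> \<beta> = \<Inter> {\<delta>. congruence ar A \<delta> \<and> centralizes ar A \<alpha> \<beta> \<delta>}"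

definition abelian :: "('f \<Rightarrow> nat) \<Rightarrow> ('a, 'f) alg \<Rightarrow> bool" where
  "abelian ar A \<longleftrightarrow> tc_comm ar A (one_con A) (one_con A) = zero_con A"

definition tensor :: "('b, 'f) alg \<Rightarrow> ('b \<Rightarrow> 'b \<Rightarrow> 'b) \<Rightarrow> ('f \<Rightarrow> 'q list \<Rightarrow> 'b)
    \<Rightarrow> ('q, 'f) alg \<Rightarrow> ('b \<times> 'q, 'f) alg" where
  "tensor B add T Q =
     \<lparr> univ = univ B \<times> univ Q,
       opn = (\<lambda>f ps. (add (opn B f (map fst ps)) (T f (map snd ps)), opn Q f (map snd ps))) \<rparr>"

definition ker_proj :: "('b \<times> 'q, 'f) alg \<Rightarrow> (('b \<times> 'q) \<times> ('b \<times> 'q)) set" where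
  "ker_proj A = {(p, p'). p \<in> univ A \<and> p' \<in> univ A \<and> snd p = snd p'}"

end

theory Submission
  imports Defs
begin

text \<open>In \<open>B \<otimes>\<^sup>T Q\<close> the first component of the value of a term is the value in \<open>B\<close> of a
  single lifted term, whose variables stand for the first components of the arguments, for the
  constant \<open>0\<close>, and for the \<open>T\<close>-values of its subterms, which only depend on second components.
  In an instance of the term condition for \<open>(1, ker q)\<close> the two \<open>ker q\<close>-related tuples have equal
  second components, so these \<open>T\<close>-values can be moved to the \<open>1\<close>-side, and the term condition for
  the abelian algebra \<open>B\<close> transfers the equality. Only the well-formedness of the Mal'cev term is
  used, not its identities.\<close>

fun subst :: "('v \<Rightarrow> ('f, 'w) trm) \<Rightarrow> ('f, 'v) trm \<Rightarrow> ('f, 'w) trm" where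
  "subst g (Var v) = g v"
| "subst g (Fn f ts) = Fn f (map (subst g) ts)"

lemma eval_subst: "eval A \<rho> (subst g t) = eval A (\<lambda>v. eval A \<rho> (g v)) t"
  by (induction t) (auto intro: arg_cong[where f = "opn A _"])

lemma wf_trm_subst: "wf_trm ar t \<Longrightarrow> (\<And>v. wf_trm ar (g v)) \<Longrightarrow> wf_trm ar (subst g t)"
  by (induction t) auto

lemma eval_map_trm: "eval A \<rho> (map_trm id h t) = eval A (\<rho> \<circ> h) t"
  by (induction t) (auto intro: arg_cong[where f = "opn A _"])

lemma wf_trm_map_trm: "wf_trm ar (map_trm id h t) = wf_trm ar t"
  by (induction t) auto

lemma eval_cong: "\<forall>v \<in> vars_trm t. \<rho> v = \<rho>' v \<Longrightarrow> eval A \<rho> t = eval A \<rho>' t"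
  by (induction t) (auto intro!: arg_cong[where f = "opn A _"])

lemma finite_vars_trm: "finite (vars_trm t)"
  by (induction t) auto

lemma eval_closed:
  assumes "is_algebra ar A" and "wf_trm ar t" and "\<And>v. \<rho> v \<in> univ A"
  shows "eval A \<rho> t \<in> univ A"
proof -
  have cl: "opn A f xs \<in> univ A" if "xs \<in> lists (univ A)" "length xs = ar f" for f xs
    using assms(1) that by (simp add: is_algebra_def)
  show ?thesis
    using assms(2) by (induction t) (auto simp: assms(3) intro!: cl)
qed

lemma term_op3_closed:
  assumes "is_algebra ar A" and "wf_trm ar m" and "x \<in> univ A" "y \<in> univ A" "z \<in> univ A"
  shows "term_op3 A m x y z \<in> univ A"
  unfolding term_op3_def by (rule eval_closed[OF assms(1,2)]) (simp add: assms(3-))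

text \<open>The term condition is stated for terms in nat-indexed variables only; since a term has
  finitely many variables it transfers to terms over any variable type.\<close>

lemma centralizes_term_condition:
  fixes t :: "('f, 'w) trm"
  assumes C: "centralizes ar A \<alpha> \<beta> \<delta>" and wf: "wf_trm ar t"
    and ab: "\<And>v. (a v, b v) \<in> \<alpha>" and cd: "\<And>v. (c v, d v) \<in> \<beta>"
    and hyp: "(eval A (\<lambda>v. if v \<in> X then a v else c v) t,
               eval A (\<lambda>v. if v \<in> X then a v else d v) t) \<in> \<delta>"
  shows "(eval A (\<lambda>v. if v \<in> X then b v else c v) t,
          eval A (\<lambda>v. if v \<in> X then b v else d v) t) \<in> \<delta>"
proof -
  obtain h :: "'w \<Rightarrow> nat" where h: "inj_on h (vars_trm t)"
    using finite_imp_inj_to_nat_seg[OF finite_vars_trm[of t]] by blast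
  define g where "g = inv_into (vars_trm t) h"
  define Xn where "Xn = h ` (X \<inter> vars_trm t)"
  have gh: "g (h w) = w" and hX: "h w \<in> Xn \<longleftrightarrow> w \<in> X" if "w \<in> vars_trm t" for w
    using inv_into_f_f[OF h that] inj_on_image_mem_iff[OF h that, of "X \<inter> vars_trm t"] that
    by (simp_all add: g_def Xn_def)
  define tn where "tn = map_trm id h t"
  have renamed: "eval A (\<lambda>n. if n \<in> Xn then p (g n) else q (g n)) tn
                 = eval A (\<lambda>v. if v \<in> X then p v else q v) t" for p q
    unfolding tn_def eval_map_trm by (rule eval_cong) (simp add: gh hX)
  have wf_tn: "wf_trm ar tn" using wf by (simp add: tn_def wf_trm_map_trm)
  have "(eval A (\<lambda>n. if n \<in> Xn then a (g n) else c (g n)) tn,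
         eval A (\<lambda>n. if n \<in> Xn then a (g n) else d (g n)) tn) \<in> \<delta>"
    using hyp by (simp only: renamed)
  then have "(eval A (\<lambda>n. if n \<in> Xn then b (g n) else c (g n)) tn,
              eval A (\<lambda>n. if n \<in> Xn then b (g n) else d (g n)) tn) \<in> \<delta>"
    by (rule C[unfolded centralizes_def, rule_format, where X = Xn and a = "\<lambda>n. a (g n)"
          and b = "\<lambda>n. b (g n)" and c = "\<lambda>n. c (g n)" and d = "\<lambda>n. d (g n)", OF wf_tn ab cd])
  then show ?thesis by (simp only: renamed)
qed

lemma centralizes_tc_comm: "centralizes ar A \<alpha> \<beta> (tc_comm ar A \<alpha> \<beta>)"
  unfolding centralizes_def tc_comm_def by blast

lemma abelian_term_condition:
  fixes t :: "('f, 'w) trm"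
  assumes "abelian ar A" and "is_algebra ar A" and wf: "wf_trm ar t"
    and "\<And>v. a v \<in> univ A" "\<And>v. b v \<in> univ A" "\<And>v. c v \<in> univ A" "\<And>v. d v \<in> univ A"
    and hyp: "eval A (\<lambda>v. if v \<in> X then a v else c v) t = eval A (\<lambda>v. if v \<in> X then a v else d v) t"
  shows "eval A (\<lambda>v. if v \<in> X then b v else c v) t = eval A (\<lambda>v. if v \<in> X then b v else d v) t"
proof -
  have C: "centralizes ar A (one_con A) (one_con A) (zero_con A)"
    using centralizes_tc_comm[of ar A "one_con A" "one_con A"] assms(1) by (simp add: abelian_def)
  have "eval A (\<lambda>v. if v \<in> X then a v else c v) t \<in> univ A"
    by (rule eval_closed[OF assms(2) wf]) (simp add: assms(4,6))
  with hyp have "(eval A (\<lambda>v. if v \<in> X then a v else c v) t,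
                  eval A (\<lambda>v. if v \<in> X then a v else d v) t) \<in> zero_con A"
    by (simp add: zero_con_def Id_on_iff)
  then have "(eval A (\<lambda>v. if v \<in> X then b v else c v) t,
              eval A (\<lambda>v. if v \<in> X then b v else d v) t) \<in> zero_con A"
    using centralizes_term_condition[OF C wf, where a = a and b = b and c = c and d = d and X = X]
    by (simp add: one_con_def assms(4-7))
  then show ?thesis by (simp add: zero_con_def Id_on_iff)
qed

lemma list_all2_Id_on: "list_all2 (\<lambda>x y. (x, y) \<in> Id_on U) xs ys \<Longrightarrow> xs = ys \<and> xs \<in> lists U"
  by (induction xs ys rule: list_all2_induct) auto

lemma congruence_zero_con: "is_algebra ar A \<Longrightarrow> congruence ar A (zero_con A)"
  unfolding congruence_def zero_con_def is_algebra_def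
  by (auto simp: equiv_def refl_on_def sym_def trans_def dest!: list_all2_Id_on)

lemma tc_comm_eq_zero_con:
  assumes "congruence ar A (zero_con A)" and "centralizes ar A \<alpha> \<beta> (zero_con A)"
  shows "tc_comm ar A \<alpha> \<beta> = zero_con A"
proof
  show "tc_comm ar A \<alpha> \<beta> \<subseteq> zero_con A"
    unfolding tc_comm_def by (rule Inter_lower) (simp add: assms)
  show "zero_con A \<subseteq> tc_comm ar A \<alpha> \<beta>"
    unfolding tc_comm_def
  proof (rule Inter_greatest)
    fix \<delta> assume "\<delta> \<in> {\<delta>. congruence ar A \<delta> \<and> centralizes ar A \<alpha> \<beta> \<delta>}"
    then have "refl_on (univ A) \<delta>" by (simp add: congruence_def equiv_def)
    then show "zero_con A \<subseteq> \<delta>" by (auto simp: zero_con_def refl_on_def)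
  qed
qed

lemma univ_tensor [simp]: "univ (tensor B add T Q) = univ B \<times> univ Q"
  by (simp add: tensor_def)

lemma opn_tensor [simp]:
  "opn (tensor B add T Q) f ps
     = (add (opn B f (map fst ps)) (T f (map snd ps)), opn Q f (map snd ps))"
  by (simp add: tensor_def)

lemma is_algebra_tensor:
  assumes B: "is_algebra ar B" and Q: "is_algebra ar Q"
    and T: "\<And>f qs. qs \<in> lists (univ Q) \<Longrightarrow> length qs = ar f \<Longrightarrow> T f qs \<in> univ B"
    and add: "\<And>x y. x \<in> univ B \<Longrightarrow> y \<in> univ B \<Longrightarrow> add x y \<in> univ B"
  shows "is_algebra ar (tensor B add T Q)"
  unfolding is_algebra_def
proof (intro conjI allI impI)
  show "univ (tensor B add T Q) \<noteq> {}"
    using B Q by (simp add: is_algebra_def)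
  fix f ps assume ps: "ps \<in> lists (univ (tensor B add T Q)) \<and> length ps = ar f"
  then have "map fst ps \<in> lists (univ B)" "map snd ps \<in> lists (univ Q)"
    by (auto simp: mem_Times_iff)
  with ps B Q show "opn (tensor B add T Q) f ps \<in> univ (tensor B add T Q)"
    by (simp add: is_algebra_def T add)
qed

text \<open>\<open>lift m\<close> replaces each \<open>f(t\<^sub>1, \<dots>, t\<^sub>n)\<close> by \<open>m(f(lift t\<^sub>1, \<dots>, lift t\<^sub>n), Zero, Twist (f(t\<^sub>1, \<dots>, t\<^sub>n)))\<close>,
  mirroring the operations \<open>f(b, x) = f(b) + T\<^sub>f(x)\<close> of the tensor algebra.\<close>

datatype ('f, 'v) lift_var = Zero | Twist "('f, 'v) trm" | Base 'v

fun lift :: "('f, nat) trm \<Rightarrow> ('f, 'v) trm \<Rightarrow> ('f, ('f, 'v) lift_var) trm" where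
  "lift m (Var v) = Var (Base v)"
| "lift m (Fn f ts) = subst (\<lambda>i. if i = 0 then Fn f (map (lift m) ts)
      else if i = 1 then Var Zero else Var (Twist (Fn f ts))) m"

lemma wf_trm_lift: "wf_trm ar m \<Longrightarrow> wf_trm ar t \<Longrightarrow> wf_trm ar (lift m t)"
  by (induction t) (auto intro!: wf_trm_subst)

text \<open>The guard keeps twist values inside the universe of B.\<close>

fun lift_asg :: "('f \<Rightarrow> nat) \<Rightarrow> ('q, 'f) alg \<Rightarrow> ('f \<Rightarrow> 'q list \<Rightarrow> 'b) \<Rightarrow> 'b
    \<Rightarrow> ('v \<Rightarrow> 'q) \<Rightarrow> ('v \<Rightarrow> 'b) \<Rightarrow> ('f, 'v) lift_var \<Rightarrow> 'b" where
  "lift_asg ar Q T z \<tau> \<beta> Zero = z"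
| "lift_asg ar Q T z \<tau> \<beta> (Base v) = \<beta> v"
| "lift_asg ar Q T z \<tau> \<beta> (Twist (Fn f ts)) =
     (if map (eval Q \<tau>) ts \<in> lists (univ Q) \<and> length ts = ar f
      then T f (map (eval Q \<tau>) ts) else z)"
| "lift_asg ar Q T z \<tau> \<beta> (Twist (Var v)) = z"

lemma lift_asg_closed:
  assumes "z \<in> univ B" and "\<And>f qs. qs \<in> lists (univ Q) \<Longrightarrow> length qs = ar f \<Longrightarrow> T f qs \<in> univ B"
    and "\<And>v. \<beta> v \<in> univ B"
  shows "lift_asg ar Q T z \<tau> \<beta> w \<in> univ B"
  using assms by (induction ar Q T z \<tau> \<beta> w rule: lift_asg.induct) auto

lemma lift_asg_Twist: "lift_asg ar Q T z \<tau> \<beta> (Twist s) = lift_asg ar Q T z \<tau> \<beta>' (Twist s)"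
  by (cases s) simp_all

lemma lift_asg_override:
  "(\<lambda>w. if w \<in> - Base ` (- X) then lift_asg ar Q T z \<tau> \<beta> w else lift_asg ar Q T z \<tau>' \<gamma> w)
     = lift_asg ar Q T z \<tau> (\<lambda>v. if v \<in> X then \<beta> v else \<gamma> v)"
proof
  fix w show "(if w \<in> - Base ` (- X) then lift_asg ar Q T z \<tau> \<beta> w else lift_asg ar Q T z \<tau>' \<gamma> w)
      = lift_asg ar Q T z \<tau> (\<lambda>v. if v \<in> X then \<beta> v else \<gamma> v) w"
    by (cases w) (auto intro: lift_asg_Twist)
qed

lemma eval_tensor:
  fixes m :: "('f, nat) trm" and t :: "('f, 'v) trm"
  assumes Q: "is_algebra ar Q" and \<rho>: "\<And>v. snd (\<rho> v) \<in> univ Q" and "wf_trm ar t"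
  shows "eval (tensor B (\<lambda>x y. term_op3 B m x z y) T Q) \<rho> t
    = (eval B (lift_asg ar Q T z (\<lambda>v. snd (\<rho> v)) (\<lambda>v. fst (\<rho> v))) (lift m t),
       eval Q (\<lambda>v. snd (\<rho> v)) t)"
  using assms(3)
proof (induction t)
  case (Var v)
  then show ?case by simp
next
  case (Fn f ts)
  let ?A = "tensor B (\<lambda>x y. term_op3 B m x z y) T Q"
  let ?\<tau> = "\<lambda>v. snd (\<rho> v)"
  let ?\<beta> = "lift_asg ar Q T z ?\<tau> (\<lambda>v. fst (\<rho> v))"
  have fst_args: "map fst (map (eval ?A \<rho>) ts) = map (\<lambda>s. eval B ?\<beta> (lift m s)) ts"
   and snd_args: "map snd (map (eval ?A \<rho>) ts) = map (eval Q ?\<tau>) ts"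
    using Fn by auto
  have "map (eval Q ?\<tau>) ts \<in> lists (univ Q)"
    using Fn.prems by (auto intro!: eval_closed[OF Q] simp: \<rho>)
  then have twist: "?\<beta> (Twist (Fn f ts)) = T f (map (eval Q ?\<tau>) ts)"
    using Fn.prems by simp
  have "eval B ?\<beta> (lift m (Fn f ts))
      = term_op3 B m (opn B f (map (\<lambda>s. eval B ?\<beta> (lift m s)) ts)) z (?\<beta> (Twist (Fn f ts)))"
    unfolding term_op3_def lift.simps eval_subst
    by (intro arg_cong[where f = "\<lambda>r. eval B r m"] ext) (simp add: comp_def)
  also have "\<dots> = fst (eval ?A \<rho> (Fn f ts))"
    by (simp only: eval.simps opn_tensor fst_conv fst_args snd_args twist)
  finally show ?case
    by (simp add: snd_args del: map_map)
qed

lemma eval_tensor_override: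
  fixes m :: "('f, nat) trm" and t :: "('f, 'v) trm"
  assumes Q: "is_algebra ar Q" and t: "wf_trm ar t" and \<tau>: "\<And>v. \<tau> v \<in> univ Q"
    and p: "\<And>v. v \<in> X \<Longrightarrow> snd (p v) = \<tau> v" and q: "\<And>v. v \<notin> X \<Longrightarrow> snd (q v) = \<tau> v"
  shows "eval (tensor B (\<lambda>x y. term_op3 B m x z y) T Q) (\<lambda>v. if v \<in> X then p v else q v) t
    = (eval B (\<lambda>w. if w \<in> - Base ` (- X) then lift_asg ar Q T z \<tau> (\<lambda>v. fst (p v)) w
                  else lift_asg ar Q T z \<tau>' (\<lambda>v. fst (q v)) w) (lift m t),
       eval Q \<tau> t)"
proof -
  have "(\<lambda>v. snd (if v \<in> X then p v else q v)) = \<tau>"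
    using p q by auto
  moreover have "(\<lambda>v. fst (if v \<in> X then p v else q v)) = (\<lambda>v. if v \<in> X then fst (p v) else fst (q v))"
    by auto
  moreover have "snd (if v \<in> X then p v else q v) \<in> univ Q" for v
    using p q \<tau> by simp
  ultimately show ?thesis
    by (simp only: eval_tensor[OF Q _ t] lift_asg_override)
qed

lemma centralizes_tensor_ker_proj:
  fixes B :: "('b, 'f) alg" and Q :: "('q, 'f) alg" and m :: "('f, nat) trm"
    and z :: 'b and T :: "'f \<Rightarrow> 'q list \<Rightarrow> 'b"
  defines "A \<equiv> tensor B (\<lambda>x y. term_op3 B m x z y) T Q"
  assumes B: "is_algebra ar B" and abelian: "abelian ar B" and Q: "is_algebra ar Q"
    and m: "wf_trm ar m" and z: "z \<in> univ B"
    and T: "\<And>f qs. qs \<in> lists (univ Q) \<Longrightarrow> length qs = ar f \<Longrightarrow> T f qs \<in> univ B"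
  shows "centralizes ar A (one_con A) (ker_proj A) (zero_con A)"
  unfolding centralizes_def
proof (intro allI impI)
  fix t :: "('f, nat) trm" and X a b c d
  assume t: "wf_trm ar t" and ab: "\<forall>v. (a v, b v) \<in> one_con A"
    and cd: "\<forall>v. (c v, d v) \<in> ker_proj A"
    and hyp: "(eval A (\<lambda>v. if v \<in> X then a v else c v) t,
               eval A (\<lambda>v. if v \<in> X then a v else d v) t) \<in> zero_con A"
  have ab_univ: "a v \<in> univ B \<times> univ Q" "b v \<in> univ B \<times> univ Q" for v
    using ab by (auto simp: one_con_def A_def)
  have cd_univ: "c v \<in> univ B \<times> univ Q" "d v \<in> univ B \<times> univ Q" "snd (d v) = snd (c v)" for v
    using cd by (auto simp: ker_proj_def A_def)
  let ?X = "- Base ` (- X)"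
  define \<tau> where "\<tau> p = (\<lambda>v. if v \<in> X then snd (p v) else snd (c v))" for p :: "nat \<Rightarrow> 'b \<times> 'q"
  define lifted where "lifted p = lift_asg ar Q T z (\<tau> p) (\<lambda>v. fst (p v))" for p
  define rest where "rest q = lift_asg ar Q T z (\<tau> a) (\<lambda>v. fst (q v))" for q :: "nat \<Rightarrow> 'b \<times> 'q"
  have lifted_univ: "lifted p w \<in> univ B" "rest p w \<in> univ B"
    if "\<And>v. p v \<in> univ B \<times> univ Q" for p w
    unfolding lifted_def rest_def using that by (auto intro!: lift_asg_closed[OF z T] simp: mem_Times_iff)
  have eval_mix: "eval A (\<lambda>v. if v \<in> X then p v else q v) t
     = (eval B (\<lambda>w. if w \<in> ?X then lifted p w else rest q w) (lift m t), eval Q (\<tau> p) t)"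
    if p: "\<And>v. p v \<in> univ B \<times> univ Q" and q: "q = c \<or> q = d" for p q
    unfolding A_def lifted_def rest_def
    by (rule eval_tensor_override[OF Q t]) (use p q cd_univ in \<open>auto simp: \<tau>_def mem_Times_iff\<close>)
  have "eval A (\<lambda>v. if v \<in> X then a v else c v) t = eval A (\<lambda>v. if v \<in> X then a v else d v) t"
    using hyp by (simp add: zero_con_def Id_on_iff)
  then have "eval B (\<lambda>w. if w \<in> ?X then lifted a w else rest c w) (lift m t)
      = eval B (\<lambda>w. if w \<in> ?X then lifted a w else rest d w) (lift m t)"
    by (simp add: eval_mix ab_univ)
  from abelian_term_condition[OF abelian B wf_trm_lift[OF m t] _ _ _ _ this]
  have "eval B (\<lambda>w. if w \<in> ?X then lifted b w else rest c w) (lift m t)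
      = eval B (\<lambda>w. if w \<in> ?X then lifted b w else rest d w) (lift m t)"
    by (simp add: lifted_univ ab_univ cd_univ)
  then have "eval A (\<lambda>v. if v \<in> X then b v else c v) t = eval A (\<lambda>v. if v \<in> X then b v else d v) t"
    by (simp add: eval_mix ab_univ)
  moreover have "is_algebra ar A"
    unfolding A_def by (rule is_algebra_tensor[OF B Q T term_op3_closed[OF B m _ z]])
  then have "eval A (\<lambda>v. if v \<in> X then b v else c v) t \<in> univ A"
    by (rule eval_closed[OF _ t]) (simp add: A_def ab_univ cd_univ)
  ultimately show "(eval A (\<lambda>v. if v \<in> X then b v else c v) t,
                    eval A (\<lambda>v. if v \<in> X then b v else d v) t) \<in> zero_con A"
    by (simp add: zero_con_def Id_on_iff)
qed

theorem lemma2p7: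
  fixes ar :: "'f \<Rightarrow> nat"
    and B :: "('b, 'f) alg" and Q :: "('q, 'f) alg"
    and m :: "('f, nat) trm" and z :: 'b
    and T :: "'f \<Rightarrow> 'q list \<Rightarrow> 'b"
  assumes "is_algebra ar B" and "is_algebra ar Q"
    and "abelian ar B"
    and "is_malcev_term ar B m"
    and "z \<in> univ B"
    and "\<forall>f qs. qs \<in> lists (univ Q) \<and> length qs = ar f \<longrightarrow> T f qs \<in> univ B"
  shows "tc_comm ar (tensor B (\<lambda>x y. term_op3 B m x z y) T Q)
           (one_con (tensor B (\<lambda>x y. term_op3 B m x z y) T Q))
           (ker_proj (tensor B (\<lambda>x y. term_op3 B m x z y) T Q))
         = zero_con (tensor B (\<lambda>x y. term_op3 B m x z y) T Q)"
proof -
  have m: "wf_trm ar m"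
    using assms(4) by (simp add: is_malcev_term_def)
  have T: "\<And>f qs. qs \<in> lists (univ Q) \<Longrightarrow> length qs = ar f \<Longrightarrow> T f qs \<in> univ B"
    using assms(6) by blast
  have "is_algebra ar (tensor B (\<lambda>x y. term_op3 B m x z y) T Q)"
    by (rule is_algebra_tensor[OF assms(1,2) T term_op3_closed[OF assms(1) m _ assms(5)]])
  from tc_comm_eq_zero_con[OF congruence_zero_con[OF this]
      centralizes_tensor_ker_proj[OF assms(1,3,2) m assms(5) T]]
  show ?thesis .
qed

end
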